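(* Let $\mathcal{C}$ be a perfect k-category. Then every full, non-empty, closed subcategory of $\mathcal{C}$ (with the subspace topologies) is perfect.
   Context: A k-category is a small category whose object and morphism sets are k-spaces (compactly generated Hausdorff) such that the source, target, identity and composition maps are continuous. A non-empty k-category $\mathcal{C}$ is perfect when the map $\mathrm{Mor}(\mathcal{C})\to\mathrm{Ob}(\mathcal{C})\times\mathrm{Ob}(\mathcal{C})$, $f\mapsto(\text{source}(f),\text{target}(f))$, is a homeomorphism (product in k-spaces). *)

theory Defs
  imports "HOL-Analysis.Analysis"
begin

text \<open>k-spaces in the sense of the paper: compactly generated Hausdorff spaces.\<close>
definition kHaus_space :: "'a topology \<Rightarrow> bool" where
  "kHaus_space X \<longleftrightarrow> k_space X \<and> Hausdorff_space X"

definition kprod :: "'a topology \<Rightarrow> 'b topology \<Rightarrow> ('a \<times> 'b) topology" where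
  "kprod X Y = kification (prod_topology X Y)"

text \<open>A (small) category with topologised object and morphism sets.
  Objects are the points of ObT, morphisms the points of MorT;
  comp g f is the composite g \<circ> f, defined when src g = tgt f.\<close>
record ('o, 'm) tcat =
  ObT  :: "'o topology"
  MorT :: "'m topology"
  src  :: "'m \<Rightarrow> 'o"
  tgt  :: "'m \<Rightarrow> 'o"
  idm  :: "'o \<Rightarrow> 'm"
  comp :: "'m \<Rightarrow> 'm \<Rightarrow> 'm"

definition Obs :: "('o, 'm) tcat \<Rightarrow> 'o set" where
  "Obs C = topspace (ObT C)"

definition Mors :: "('o, 'm) tcat \<Rightarrow> 'm set" where
  "Mors C = topspace (MorT C)"

definition composable :: "('o, 'm) tcat \<Rightarrow> ('m \<times> 'm) set" where
  "composable C = {(g, f). g \<in> Mors C \<and> f \<in> Mors C \<and> src C g = tgt C f}"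

definition is_category :: "('o, 'm) tcat \<Rightarrow> bool" where
  "is_category C \<longleftrightarrow>
     (\<forall>f\<in>Mors C. src C f \<in> Obs C \<and> tgt C f \<in> Obs C) \<and>
     (\<forall>x\<in>Obs C. idm C x \<in> Mors C \<and> src C (idm C x) = x \<and> tgt C (idm C x) = x) \<and>
     (\<forall>(g, f)\<in>composable C. comp C g f \<in> Mors C \<and>
         src C (comp C g f) = src C f \<and> tgt C (comp C g f) = tgt C g) \<and>
     (\<forall>f\<in>Mors C. comp C f (idm C (src C f)) = f \<and> comp C (idm C (tgt C f)) f = f) \<and>
     (\<forall>h\<in>Mors C. \<forall>g\<in>Mors C. \<forall>f\<in>Mors C. src C h = tgt C g \<longrightarrow> src C g = tgt C f \<longrightarrow>
         comp C h (comp C g f) = comp C (comp C h g) f)"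

definition kcategory :: "('o, 'm) tcat \<Rightarrow> bool" where
  "kcategory C \<longleftrightarrow> is_category C \<and>
     kHaus_space (ObT C) \<and> kHaus_space (MorT C) \<and>
     continuous_map (MorT C) (ObT C) (src C) \<and>
     continuous_map (MorT C) (ObT C) (tgt C) \<and>
     continuous_map (ObT C) (MorT C) (idm C) \<and>
     continuous_map (subtopology (kprod (MorT C) (MorT C)) (composable C)) (MorT C)
        (\<lambda>(g, f). comp C g f)"

definition perfect_kcategory :: "('o, 'm) tcat \<Rightarrow> bool" where
  "perfect_kcategory C \<longleftrightarrow> kcategory C \<and> Obs C \<noteq> {} \<and>
     homeomorphic_map (MorT C) (kprod (ObT C) (ObT C)) (\<lambda>f. (src C f, tgt C f))"

definition full_mors :: "('o, 'm) tcat \<Rightarrow> 'o set \<Rightarrow> 'm set" where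
  "full_mors C D = {f \<in> Mors C. src C f \<in> D \<and> tgt C f \<in> D}"

definition full_subcat :: "('o, 'm) tcat \<Rightarrow> 'o set \<Rightarrow> ('o, 'm) tcat" where
  "full_subcat C D = C\<lparr> ObT := subtopology (ObT C) D,
                        MorT := subtopology (MorT C) (full_mors C D) \<rparr>"

definition full_nonempty_closed_subcat :: "('o, 'm) tcat \<Rightarrow> 'o set \<Rightarrow> bool" where
  "full_nonempty_closed_subcat C D \<longleftrightarrow>
     D \<subseteq> Obs C \<and> D \<noteq> {} \<and> closedin (ObT C) D \<and> closedin (MorT C) (full_mors C D)"

end

theory Submission
  imports Defs
begin

text \<open>All structure of a full subcategory is inherited, so the only topological input is that
  k-ification commutes with passing to a closed subspace: a set open in the k-ification of a
  closed subspace A extends, by adding the complement of A, to a set open in the k-ification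
  of the whole space. Applied to D \<times> D this identifies the k-product of the subspaces with a
  subspace of the k-product, and the homeomorphism Mor \<cong> Ob \<times> Ob restricts to the morphisms
  with both ends in D.\<close>

lemma kification_closed_subtopology:
  assumes A: "closedin X A"
  shows "kification (subtopology X A) = subtopology (kification X) A"
  unfolding openin_inject [symmetric]
proof (rule ext, rule iffI)
  fix U assume U: "openin (kification (subtopology X A)) U"
  then have Usub: "U \<subseteq> topspace X \<inter> A"
    by (simp add: openin_kification)
  define V where "V = U \<union> (topspace X - A)"
  have "openin (kification X) V"
    unfolding openin_kification
  proof (intro conjI allI impI)
    show "V \<subseteq> topspace X" using Usub by (auto simp: V_def)
    fix K assume K: "compactin X K"
    have KT: "K \<subseteq> topspace X" using K compactin_subset_topspace by blast
    have "compactin X (K \<inter> A)" using K A closed_Int_compactin by (metis inf_commute)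
    then have "compactin (subtopology X A) (K \<inter> A)"
      by (simp add: compactin_subtopology)
    with U have "openin (subtopology (subtopology X A) (K \<inter> A)) ((K \<inter> A) \<inter> U)"
      by (simp add: openin_kification)
    then obtain W where W: "openin X W" "(K \<inter> A) \<inter> U = W \<inter> (A \<inter> (K \<inter> A))"
      by (auto simp: subtopology_subtopology openin_subtopology)
    have "openin X (W \<union> (topspace X - A))" using W(1) A by blast
    then have "openin (subtopology X K) (K \<inter> (W \<union> (topspace X - A)))"
      by (rule openin_subtopology_Int2)
    moreover have "K \<inter> (W \<union> (topspace X - A)) = K \<inter> V"
      using W(2) KT Usub by (auto simp: V_def)
    ultimately show "openin (subtopology X K) (K \<inter> V)" by simp
  qed
  moreover have "U = V \<inter> A" using Usub by (auto simp: V_def)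
  ultimately show "openin (subtopology (kification X) A) U"
    by (auto simp: openin_subtopology)
next
  fix U assume "openin (subtopology (kification X) A) U"
  then show "openin (kification (subtopology X A)) U"
    by (rule subtopology_kification_finer)
qed

lemma kprod_closed_subtopology:
  assumes "closedin X A" and "closedin Y B"
  shows "kprod (subtopology X A) (subtopology Y B) = subtopology (kprod X Y) (A \<times> B)"
proof -
  have "closedin (prod_topology X Y) (A \<times> B)"
    using assms by (simp add: closedin_prod_Times_iff)
  then show ?thesis
    unfolding kprod_def subtopology_Times [symmetric] by (rule kification_closed_subtopology)
qed

lemma kHaus_space_closed_subtopology:
  "kHaus_space X \<Longrightarrow> closedin X A \<Longrightarrow> kHaus_space (subtopology X A)"
  by (simp add: kHaus_space_def k_space_closed_subtopology Hausdorff_space_subtopology)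

lemma full_subcat_simps [simp]:
  "ObT (full_subcat C D) = subtopology (ObT C) D"
  "MorT (full_subcat C D) = subtopology (MorT C) (full_mors C D)"
  "src (full_subcat C D) = src C"
  "tgt (full_subcat C D) = tgt C"
  "idm (full_subcat C D) = idm C"
  "comp (full_subcat C D) = comp C"
  by (simp_all add: full_subcat_def)

lemma Obs_full_subcat: "D \<subseteq> Obs C \<Longrightarrow> Obs (full_subcat C D) = D"
  by (auto simp: Obs_def)

lemma Mors_full_subcat: "Mors (full_subcat C D) = full_mors C D"
  by (auto simp: Mors_def full_mors_def)

lemma composable_full_subcat:
  "composable (full_subcat C D) = composable C \<inter> (full_mors C D \<times> full_mors C D)"
  by (auto simp: composable_def Mors_full_subcat full_mors_def)

lemma comp_in_full_mors:
  assumes "is_category C" "(g, f) \<in> composable (full_subcat C D)"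
  shows "comp C g f \<in> full_mors C D"
  using assms unfolding is_category_def composable_full_subcat
  by (fastforce simp: full_mors_def composable_def)

lemma is_category_full_subcat:
  "is_category C \<Longrightarrow> D \<subseteq> Obs C \<Longrightarrow> is_category (full_subcat C D)"
  unfolding is_category_def Mors_full_subcat Obs_full_subcat composable_full_subcat
  by (auto simp: full_mors_def composable_def)

lemma closedin_full_mors:
  assumes "kcategory C" "closedin (ObT C) D"
  shows "closedin (MorT C) (full_mors C D)"
proof -
  have "full_mors C D = {f \<in> topspace (MorT C). src C f \<in> D} \<inter> {f \<in> topspace (MorT C). tgt C f \<in> D}"
    by (auto simp: full_mors_def Mors_def)
  then show ?thesis
    using assms by (auto simp: kcategory_def intro!: closedin_Int closedin_continuous_map_preimage)
qed

lemma kcategory_full_subcat: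
  assumes C: "kcategory C" and D: "D \<subseteq> Obs C" "closedin (ObT C) D"
  shows "kcategory (full_subcat C D)"
proof -
  let ?F = "full_mors C D"
  have F: "closedin (MorT C) ?F"
    using C D(2) by (rule closedin_full_mors)
  have ends: "src C f \<in> D" "tgt C f \<in> D" if "f \<in> ?F" for f
    using that by (simp_all add: full_mors_def)
  have idm: "idm C x \<in> ?F" if "x \<in> D" for x
    using C D(1) that by (auto simp: kcategory_def is_category_def full_mors_def Obs_def)
  have comp_sub: "composable (full_subcat C D) \<subseteq> composable C"
    by (simp add: composable_full_subcat)
  have "continuous_map (subtopology (kprod (MorT C) (MorT C)) (composable (full_subcat C D)))
      (subtopology (MorT C) ?F) (\<lambda>(g, f). comp C g f)"
    using C comp_in_full_mors[of C] continuous_map_from_subtopology_mono[OF _ comp_sub]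
    by (auto simp: kcategory_def continuous_map_in_subtopology)
  moreover have "subtopology (kprod (MorT C) (MorT C)) (composable (full_subcat C D))
      = subtopology (kprod (subtopology (MorT C) ?F) (subtopology (MorT C) ?F))
          (composable (full_subcat C D))"
    by (simp add: kprod_closed_subtopology[OF F F] subtopology_subtopology composable_full_subcat
        Int_absorb1)
  moreover have "kHaus_space (subtopology (ObT C) D)" "kHaus_space (subtopology (MorT C) ?F)"
    using C D(2) F by (simp_all add: kcategory_def kHaus_space_closed_subtopology)
  ultimately show ?thesis
    using C D is_category_full_subcat[of C D] ends idm
    by (auto simp: kcategory_def Mors_full_subcat continuous_map_in_subtopology
        continuous_map_from_subtopology)
qed

lemma perfect_kcategory_full_subcat:
  assumes C: "perfect_kcategory C" and D: "D \<subseteq> Obs C" "D \<noteq> {}" "closedin (ObT C) D"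
  shows "perfect_kcategory (full_subcat C D)"
proof -
  have kC: "kcategory C"
    and hom: "homeomorphic_map (MorT C) (kprod (ObT C) (ObT C)) (\<lambda>f. (src C f, tgt C f))"
    using C by (simp_all add: perfect_kcategory_def)
  have "homeomorphic_map (subtopology (MorT C) (full_mors C D))
      (subtopology (kprod (ObT C) (ObT C)) (D \<times> D)) (\<lambda>f. (src C f, tgt C f))"
    using hom by (rule homeomorphic_map_subtopologies_alt) (auto simp: full_mors_def Mors_def)
  then show ?thesis
    using kcategory_full_subcat[OF kC D(1,3)] D
    by (simp add: perfect_kcategory_def Obs_full_subcat kprod_closed_subtopology)
qed

theorem mainTheorem6:
  fixes C :: "('o, 'm) tcat" and D :: "'o set"
  assumes "perfect_kcategory C"
    and "full_nonempty_closed_subcat C D"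
  shows "perfect_kcategory (full_subcat C D)"
  using assms by (simp add: full_nonempty_closed_subcat_def perfect_kcategory_full_subcat)

end
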